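(* Let $p(x,y)$ be a real polynomial in two variables and let $n\ge 2$. Then \[ \langle S_{2,n}\,p(S_{2,n},n)\rangle_n=\frac{n}{2}\langle p(S_{2,n},n)\rangle_n-\frac{n(n-2)}{2(2n-3)}\langle p(S_{2,n-1},n)\rangle_{n-1}, \] where $\langle\cdot\rangle_n$ denotes expectation over $(\Omega_n,P_n)$ and $\langle\cdot\rangle_{n-1}$ expectation over $(\Omega_{n-1},P_{n-1})$.
   Context: For $n\ge 1$, let $\Omega_n$ be the set of rooted plane (ordered) full binary trees with $n$ leaves (every internal node has exactly two children, left and right distinguished; $\Omega_1$ consists of the single-vertex tree). $P_n$ is the uniform probability measure on $\Omega_n$. Horton–Strahler ordering: every leaf has order 1; an internal node whose two children have different orders $r_1\neq r_2$ has order $\max\{r_1,r_2\}$; an internal node whose two children both have order $r$ has order $r+1$. A branch of order $r$ is a maximal connected path consisting of nodes all of order $r$. $S_{2,n}(\tau)$ is the number of branches of order $2$ in $\tau\in\Omega_n$. *)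

theory Defs
  imports Complex_Main
begin

datatype ftree = Leaf | Node ftree ftree

fun leaves :: "ftree \<Rightarrow> nat" where
  "leaves Leaf = 1"
| "leaves (Node l r) = leaves l + leaves r"

definition Omega :: "nat \<Rightarrow> ftree set" where
  "Omega n = {t. leaves t = n}"

fun hs_order :: "ftree \<Rightarrow> nat" where
  "hs_order Leaf = 1"
| "hs_order (Node l r) =
     (if hs_order l = hs_order r then hs_order l + 1 else max (hs_order l) (hs_order r))"

text \<open>A branch of order r is a maximal path of
nodes of order r; each such branch is identified by its topmost node, i.e. a node
of order r that is the root or whose parent has order different from r.
branch_tops r po t counts such nodes in t, where po is the order of the parent of
the root of t (0 if t is the whole tree, orders being at least 1).\<close>
fun branch_tops :: "nat \<Rightarrow> nat \<Rightarrow> ftree \<Rightarrow> nat" where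
  "branch_tops r po Leaf = (if hs_order Leaf = r \<and> po \<noteq> r then 1 else 0)"
| "branch_tops r po (Node l t) =
     (if hs_order (Node l t) = r \<and> po \<noteq> r then 1 else 0)
     + branch_tops r (hs_order (Node l t)) l + branch_tops r (hs_order (Node l t)) t"

definition S :: "nat \<Rightarrow> ftree \<Rightarrow> nat" where
  "S r t = branch_tops r 0 t"

definition expect :: "nat \<Rightarrow> (ftree \<Rightarrow> real) \<Rightarrow> real" where
  "expect n f = (\<Sum>t\<in>Omega n. f t) / real (card (Omega n))"

definition poly2 :: "(nat \<Rightarrow> nat \<Rightarrow> real) \<Rightarrow> nat \<Rightarrow> real \<Rightarrow> real \<Rightarrow> real" where
  "poly2 c d x y = (\<Sum>i\<le>d. \<Sum>j\<le>d. c i j * x ^ i * y ^ j)"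

end

theory Submission
  imports Defs
begin

text \<open>Every branch of order 2 ends in exactly one cherry (an internal node with two leaf
children), so S_2 counts cherries.  A tree with n leaves has n - 2 S_2 leaves outside cherries;
deleting such a leaf preserves S_2, and conversely each such deletion is undone by grafting a new
leaf beside one of the n - 2 internal nodes of a tree with n - 1 leaves, on either side.  Double
counting these pairs gives
  sum over Omega n of (n - 2 S_2) g(S_2) = 2 (n - 2) * sum over Omega (n - 1) of g(S_2),
and the same argument with arbitrary leaves gives n |Omega n| = 2 (2n - 3) |Omega (n - 1)|.
Dividing the first identity by |Omega n| yields the theorem.\<close>

fun cherries :: "ftree \<Rightarrow> nat" where
  "cherries Leaf = 0"
| "cherries (Node l r) = (if l = Leaf \<and> r = Leaf then 1 else cherries l + cherries r)"

lemma hs_order_ge1: "hs_order t \<ge> 1"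
  by (induction t) auto

lemma hs_order_Node_ge2: "hs_order (Node l r) \<ge> 2"
  using hs_order_ge1[of l] hs_order_ge1[of r] by auto

lemma hs_order_eq_1_iff: "hs_order t = 1 \<longleftrightarrow> t = Leaf"
proof (cases t)
  case (Node l r)
  then show ?thesis using hs_order_Node_ge2[of l r] by simp
qed simp

lemma branch_tops_2:
  "branch_tops 2 po t + (if po = 2 \<and> hs_order t = 2 then 1 else 0) = cherries t"
proof (induction t arbitrary: po)
  case (Node l r)
  show ?case
  proof (cases "l = Leaf \<and> r = Leaf")
    case False
    then have "hs_order l \<noteq> 1 \<or> hs_order r \<noteq> 1"
      using hs_order_eq_1_iff by auto
    with Node.IH[of "hs_order (Node l r)"] show ?thesis
      using hs_order_ge1[of l] hs_order_ge1[of r] by (auto split: if_splits)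
  qed simp
qed simp

lemma S_2_eq_cherries: "S 2 t = cherries t"
  using branch_tops_2[of 0 t] by (simp add: S_def)

lemma leaves_pos: "leaves t > 0"
  by (induction t) auto

lemma finite_Omega: "finite (Omega n)"
proof (induction n rule: less_induct)
  case (less n)
  have "Omega n \<subseteq> insert Leaf (case_prod Node ` ((\<Union>i<n. Omega i) \<times> (\<Union>i<n. Omega i)))"
  proof
    fix t assume "t \<in> Omega n"
    then show "t \<in> insert Leaf (case_prod Node ` ((\<Union>i<n. Omega i) \<times> (\<Union>i<n. Omega i)))"
      using leaves_pos by (cases t) (force simp: Omega_def)+
  qed
  then show ?case
    using less by (auto intro: finite_subset)
qed

lemma Omega_nonempty: "n > 0 \<Longrightarrow> Omega n \<noteq> {}"
proof (induction n rule: nat_induct_non_zero)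
  case 1
  have "Leaf \<in> Omega 1" by (simp add: Omega_def)
  then show ?case by blast
next
  case (Suc n)
  then obtain t where "t \<in> Omega n" by blast
  then have "Node Leaf t \<in> Omega (Suc n)" by (simp add: Omega_def)
  then show ?case by blast
qed

lemma card_Omega_pos: "n > 0 \<Longrightarrow> card (Omega n) > 0"
  using Omega_nonempty finite_Omega card_gt_0_iff by blast

lemma Omega_not_Leaf: "t \<in> Omega n \<Longrightarrow> n \<ge> 2 \<Longrightarrow> t \<noteq> Leaf"
  by (auto simp: Omega_def)

text \<open>Removing a leaf contracts its parent into its sibling; a leaf is free if its sibling is
not a leaf, i.e. if it belongs to no cherry.  Adding a leaf grafts a new leaf as left or right
sibling of some node (of an internal node, for a free leaf).  The lists enumerate the resulting
trees with multiplicity, one entry per choice of leaf or of node and side.\<close>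

fun remove_leaf :: "ftree \<Rightarrow> ftree list" where
  "remove_leaf Leaf = []"
| "remove_leaf (Node l r) = (if l = Leaf then [r] else []) @ (if r = Leaf then [l] else [])
     @ map (\<lambda>x. Node x r) (remove_leaf l) @ map (Node l) (remove_leaf r)"

fun add_leaf :: "ftree \<Rightarrow> ftree list" where
  "add_leaf Leaf = [Node Leaf Leaf, Node Leaf Leaf]"
| "add_leaf (Node l r) = [Node Leaf (Node l r), Node (Node l r) Leaf]
     @ map (\<lambda>x. Node x r) (add_leaf l) @ map (Node l) (add_leaf r)"

fun remove_free_leaf :: "ftree \<Rightarrow> ftree list" where
  "remove_free_leaf Leaf = []"
| "remove_free_leaf (Node l r) =
     (if l = Leaf \<and> r \<noteq> Leaf then [r] else []) @ (if r = Leaf \<and> l \<noteq> Leaf then [l] else [])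
     @ map (\<lambda>x. Node x r) (remove_free_leaf l) @ map (Node l) (remove_free_leaf r)"

fun add_free_leaf :: "ftree \<Rightarrow> ftree list" where
  "add_free_leaf Leaf = []"
| "add_free_leaf (Node l r) = [Node Leaf (Node l r), Node (Node l r) Leaf]
     @ map (\<lambda>x. Node x r) (add_free_leaf l) @ map (Node l) (add_free_leaf r)"

lemma count_list_map_Node_left:
  "count_list (map (\<lambda>x. Node x r) xs) t =
     (case t of Leaf \<Rightarrow> 0 | Node a b \<Rightarrow> if b = r then count_list xs a else 0)"
  by (induction xs) (auto split: ftree.splits)

lemma count_list_map_Node_right:
  "count_list (map (Node l) xs) t =
     (case t of Leaf \<Rightarrow> 0 | Node a b \<Rightarrow> if a = l then count_list xs b else 0)"
  by (induction xs) (auto split: ftree.splits)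

lemma count_list_remove_leaf: "count_list (remove_leaf t) u = count_list (add_leaf u) t"
  by (induction t arbitrary: u; case_tac u)
     (auto simp: count_list_map_Node_left count_list_map_Node_right)

lemma count_list_remove_free_leaf:
  "count_list (remove_free_leaf t) u = count_list (add_free_leaf u) t"
  by (induction t arbitrary: u; case_tac u)
     (auto simp: count_list_map_Node_left count_list_map_Node_right)

lemma leaves_remove_leaf: "u \<in> set (remove_leaf t) \<Longrightarrow> leaves t = Suc (leaves u)"
  by (induction t arbitrary: u) auto

lemma leaves_add_leaf: "t \<in> set (add_leaf u) \<Longrightarrow> leaves t = Suc (leaves u)"
  by (induction u arbitrary: t) auto

lemma leaves_remove_free_leaf: "u \<in> set (remove_free_leaf t) \<Longrightarrow> leaves t = Suc (leaves u)"
  by (induction t arbitrary: u) auto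

lemma leaves_add_free_leaf: "t \<in> set (add_free_leaf u) \<Longrightarrow> leaves t = Suc (leaves u)"
  by (induction u arbitrary: t) auto

lemma length_remove_leaf: "t \<noteq> Leaf \<Longrightarrow> length (remove_leaf t) = leaves t"
  by (induction t) (auto split: if_splits)

lemma length_add_leaf: "length (add_leaf u) = 2 * (2 * leaves u - 1)"
proof (induction u)
  case (Node l r)
  then show ?case using leaves_pos[of l] leaves_pos[of r] by simp
qed simp

lemma length_remove_free_leaf:
  "t \<noteq> Leaf \<Longrightarrow> length (remove_free_leaf t) + 2 * cherries t = leaves t"
  by (induction t) (auto split: if_splits)

lemma length_add_free_leaf: "length (add_free_leaf u) = 2 * (leaves u - 1)"
proof (induction u)
  case (Node l r)
  then show ?case using leaves_pos[of l] leaves_pos[of r] by simp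
qed simp

lemma Leaf_notin_remove_free_leaf: "Leaf \<notin> set (remove_free_leaf t)"
  by (induction t) auto

lemma cherries_remove_free_leaf: "u \<in> set (remove_free_leaf t) \<Longrightarrow> cherries u = cherries t"
  by (induction t arbitrary: u) (auto simp: Leaf_notin_remove_free_leaf split: if_splits)

lemma sum_list_map_eq_sum_count_list:
  fixes f :: "'a \<Rightarrow> 'b::semiring_1"
  assumes "finite X" "set xs \<subseteq> X"
  shows "(\<Sum>x\<leftarrow>xs. f x) = (\<Sum>x\<in>X. of_nat (count_list xs x) * f x)"
  using assms(2)
proof (induction xs)
  case (Cons y xs)
  have "(\<Sum>x\<in>X. of_nat (count_list (y # xs) x) * f x)
      = (\<Sum>x\<in>X. of_nat (count_list xs x) * f x) + (\<Sum>x\<in>X. if x = y then f x else 0)"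
    by (simp add: sum.distrib[symmetric]) (rule sum.cong, auto simp: algebra_simps)
  also have "(\<Sum>x\<in>X. if x = y then f x else 0) = f y"
    using Cons.prems assms(1) by (simp add: sum.delta')
  finally show ?case using Cons by (simp add: add.commute)
qed simp

lemma sum_sum_list_swap:
  fixes h :: "'a \<Rightarrow> 'b \<Rightarrow> 'c::semiring_1"
  assumes "finite A" "finite B"
    and "\<And>a. a \<in> A \<Longrightarrow> set (f a) \<subseteq> B" and "\<And>b. b \<in> B \<Longrightarrow> set (g b) \<subseteq> A"
    and count_eq: "\<And>a b. count_list (f a) b = count_list (g b) a"
  shows "(\<Sum>a\<in>A. \<Sum>b\<leftarrow>f a. h a b) = (\<Sum>b\<in>B. \<Sum>a\<leftarrow>g b. h a b)"
proof -
  have "(\<Sum>a\<in>A. \<Sum>b\<leftarrow>f a. h a b) = (\<Sum>a\<in>A. \<Sum>b\<in>B. of_nat (count_list (f a) b) * h a b)"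
    using assms(2,3) by (simp add: sum_list_map_eq_sum_count_list)
  also have "\<dots> = (\<Sum>b\<in>B. \<Sum>a\<in>A. of_nat (count_list (g b) a) * h a b)"
    by (simp add: count_eq sum.swap[of _ A])
  also have "\<dots> = (\<Sum>b\<in>B. \<Sum>a\<leftarrow>g b. h a b)"
    using assms(1,4) by (simp add: sum_list_map_eq_sum_count_list)
  finally show ?thesis .
qed

lemma card_Omega_recurrence:
  assumes "n \<ge> 2"
  shows "n * card (Omega n) = 2 * (2 * n - 3) * card (Omega (n - 1))"
proof -
  have "(\<Sum>t\<in>Omega n. \<Sum>u\<leftarrow>remove_leaf t. 1) = (\<Sum>u\<in>Omega (n - 1). \<Sum>t\<leftarrow>add_leaf u. (1::nat))"
    using assms
    by (intro sum_sum_list_swap finite_Omega count_list_remove_leaf)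
       (auto simp: Omega_def dest: leaves_remove_leaf leaves_add_leaf)
  moreover have "length (remove_leaf t) = n" if "t \<in> Omega n" for t
    using that assms by (simp add: length_remove_leaf Omega_not_Leaf) (simp add: Omega_def)
  moreover have "length (add_leaf u) = 2 * (2 * n - 3)" if "u \<in> Omega (n - 1)" for u
    using that assms by (simp add: length_add_leaf Omega_def)
  ultimately show ?thesis
    by (simp add: sum_list_triv mult.commute)
qed

lemma sum_Omega_free_leaves:
  fixes g :: "nat \<Rightarrow> real"
  assumes "n \<ge> 2"
  shows "(\<Sum>t\<in>Omega n. (real n - 2 * real (cherries t)) * g (cherries t))
       = 2 * (real n - 2) * (\<Sum>u\<in>Omega (n - 1). g (cherries u))"
proof -
  have "(\<Sum>t\<in>Omega n. \<Sum>u\<leftarrow>remove_free_leaf t. g (cherries u))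
      = (\<Sum>u\<in>Omega (n - 1). \<Sum>t\<leftarrow>add_free_leaf u. g (cherries u))"
    using assms
    by (intro sum_sum_list_swap finite_Omega count_list_remove_free_leaf)
       (auto simp: Omega_def dest: leaves_remove_free_leaf leaves_add_free_leaf)
  moreover have "(\<Sum>u\<leftarrow>remove_free_leaf t. g (cherries u))
      = (real n - 2 * real (cherries t)) * g (cherries t)" if "t \<in> Omega n" for t
  proof -
    have "length (remove_free_leaf t) + 2 * cherries t = n"
      using that assms length_remove_free_leaf Omega_not_Leaf by (auto simp: Omega_def)
    then have "real (length (remove_free_leaf t)) = real n - 2 * real (cherries t)"
      by linarith
    then show ?thesis
      by (simp add: cherries_remove_free_leaf sum_list_triv cong: map_cong)
  qed
  moreover have "length (add_free_leaf u) = 2 * (n - 2)" if "u \<in> Omega (n - 1)" for u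
    using that by (simp add: length_add_free_leaf Omega_def)
  ultimately show ?thesis
    using assms by (simp add: sum_list_triv sum_distrib_left of_nat_diff)
qed

lemma expect_cherries_mult:
  fixes g :: "nat \<Rightarrow> real"
  assumes n: "n \<ge> 2"
  shows "expect n (\<lambda>t. real (cherries t) * g (cherries t))
       = real n / 2 * expect n (\<lambda>t. g (cherries t))
         - real n * (real n - 2) / (2 * (2 * real n - 3)) * expect (n - 1) (\<lambda>t. g (cherries t))"
proof -
  define A where "A = (\<Sum>t\<in>Omega n. real (cherries t) * g (cherries t))"
  define B where "B = (\<Sum>t\<in>Omega n. g (cherries t))"
  define B' where "B' = (\<Sum>u\<in>Omega (n - 1). g (cherries u))"
  define C where "C = real (card (Omega n))"
  define C' where "C' = real (card (Omega (n - 1)))"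
  have pos: "C > 0" "C' > 0" "2 * real n - 3 > 0"
    using n card_Omega_pos[of n] card_Omega_pos[of "n - 1"] by (auto simp: C_def C'_def)
  have "real (n * card (Omega n)) = real (2 * (2 * n - 3) * card (Omega (n - 1)))"
    using card_Omega_recurrence[OF n] by (rule arg_cong)
  then have card_rec: "real n * C = 2 * (2 * real n - 3) * C'"
    using n by (simp add: C_def C'_def of_nat_diff)
  have "real n * B - 2 * A = 2 * (real n - 2) * B'"
    using sum_Omega_free_leaves[OF n, of g]
    by (simp add: A_def B_def B'_def left_diff_distrib sum_subtractf sum_distrib_left mult.assoc)
  then have A_eq: "A = real n / 2 * B - (real n - 2) * B'"
    by (simp add: field_simps)
  have "real n * (real n - 2) / (2 * (2 * real n - 3)) * (B' / C')
      = real n * ((real n - 2) * B') / (2 * (2 * real n - 3) * C')"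
    by simp
  also have "\<dots> = (real n - 2) * B' / C"
    unfolding card_rec[symmetric] using n by simp
  finally have "A / C = real n / 2 * (B / C) - real n * (real n - 2) / (2 * (2 * real n - 3)) * (B' / C')"
    using A_eq by (simp add: diff_divide_distrib)
  then show ?thesis
    by (simp add: expect_def A_def B_def B'_def C_def C'_def)
qed

theorem proposition1:
  fixes c :: "nat \<Rightarrow> nat \<Rightarrow> real" and d n :: nat
  assumes "n \<ge> 2"
  shows "expect n (\<lambda>t. real (S 2 t) * poly2 c d (real (S 2 t)) (real n))
       = real n / 2 * expect n (\<lambda>t. poly2 c d (real (S 2 t)) (real n))
         - real n * (real n - 2) / (2 * (2 * real n - 3))
           * expect (n - 1) (\<lambda>t. poly2 c d (real (S 2 t)) (real n))"
  using expect_cherries_mult[OF assms, of "\<lambda>k. poly2 c d (real k) (real n)"]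
  by (simp add: S_2_eq_cherries)

end
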